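(* Let $p$ be a prime, $n=n_1n_2$, $d$ a divisor of $n$ with $1<d<n$, $Q=p^n$, $m\ge0$ an integer and $N=n_1(m+1)$. Let $h\in\mathbb{Z}[y]$ be monic of degree $n_1$, and let $f\in\mathbb{Z}[y][x]$ be monic in $x$ of degree $\deg_x f$, with $\deg_y f\le n_1-1$. Then there is a constant $K>0$ depending only on $n_1$, $m$, $\deg_x f$ and $\|h\|_\infty$ such that every $P\in\mathbb{Z}[x,y]$ with $\deg_xP\le m$, $\deg_yP\le n_1-1$ and $\|P\|_\infty\le 2^{(N-1)/4}p^{(n-d)/N}$ satisfies $$\bigl|\mathrm{Res}_y\bigl(\mathrm{Res}_x(P,f),h\bigr)\bigr|\le K\,Q^{(1-\frac dn)\frac{\deg_x f}{m+1}}\,\|f\|_\infty^{\,n_1 m}.$$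
   Context: $\mathrm{Res}_x$ (resp. $\mathrm{Res}_y$) denotes the resultant with respect to the variable $x$ (resp. $y$); the quantity $\mathrm{Res}_y(\mathrm{Res}_x(P,f),h)$ is called the pseudonorm of $P$. For a polynomial with integer coefficients (in one or several variables), $\|\cdot\|_\infty$ is the maximum absolute value of its coefficients. *)

theory Defs
  imports Complex_Main "Subresultants.Resultant_Prelim"
begin

text \<open>Bivariate integer polynomials in x, y are represented as \<open>int poly poly\<close>:
  polynomials in x whose coefficients are polynomials in y.
  \<open>resultant\<close> (from the AFP Subresultants entry) is the Sylvester resultant.\<close>

definition norm_inf1 :: "int poly \<Rightarrow> int" where
  "norm_inf1 h = (MAX j \<in> {..degree h}. \<bar>coeff h j\<bar>)"

definition norm_inf2 :: "int poly poly \<Rightarrow> int" where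
  "norm_inf2 P = (MAX i \<in> {..degree P}. norm_inf1 (coeff P i))"

definition degree_y :: "int poly poly \<Rightarrow> nat" where
  "degree_y P = (MAX i \<in> {..degree P}. degree (coeff P i))"

end

theory Submission imports Defs
begin

text \<open>Both resultants are determinants of Sylvester matrices, and Leibniz' formula bounds such a
  determinant by the factorial of its size times the product of row bounds, measured in any
  submultiplicative norm on the entries: the absolute value for the outer resultant, and the
  \<open>\<ell>\<^sup>1\<close>-norm of the coefficients in y for the inner one. As the y-degree of Res_x(P,f) is at most
  (deg_x P + deg_x f)(n1 - 1), this bounds the pseudonorm by a constant (depending on n1, m,
  deg_x f and the height of h) times the powers n1 deg_x f of the height of P and n1 m of the
  height of f. Raising the assumed bound on the height of P to the power n1 deg_x f yields exactly
  the factor Q^((1 - d/n) deg_x f / (m + 1)).\<close>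

locale submultiplicative_norm =
  fixes N :: "'a::comm_ring_1 \<Rightarrow> real"
  assumes N_0: "N 0 = 0" and N_1: "N 1 \<le> 1" and N_uminus: "N (- x) = N x"
    and N_add: "N (x + y) \<le> N x + N y" and N_mult: "N (x * y) \<le> N x * N y"
begin

lemma N_nonneg: "0 \<le> N x"
  using N_add[of x "- x"] by (simp add: N_0 N_uminus)

lemma N_sum_le: "N (sum f S) \<le> (\<Sum>i\<in>S. N (f i))"
  by (induction S rule: infinite_finite_induct) (auto simp: N_0 intro: order.trans[OF N_add])

lemma N_prod_le: "N (prod f S) \<le> (\<Prod>i\<in>S. N (f i))"
proof (induction S rule: infinite_finite_induct)
  case (insert x F)
  have "N (f x * prod f F) \<le> N (f x) * N (prod f F)" by (rule N_mult)
  also have "\<dots> \<le> N (f x) * (\<Prod>i\<in>F. N (f i))" using insert N_nonneg by (simp add: mult_left_mono)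
  finally show ?case using insert by simp
qed (simp_all add: N_1)

lemma N_det_le:
  assumes A: "A \<in> carrier_mat k k"
    and row_bound: "\<And>i j. i < k \<Longrightarrow> j < k \<Longrightarrow> N (A $$ (i, j)) \<le> b i"
  shows "N (det A) \<le> fact k * (\<Prod>i<k. b i)"
proof -
  let ?Perms = "{p. p permutes {0..<k}}"
  have "N (det A) \<le> (\<Sum>p\<in>?Perms. N (signof p * (\<Prod>i=0..<k. A $$ (i, p i))))"
    unfolding det_def'[OF A] by (rule N_sum_le)
  also have "\<dots> \<le> (\<Sum>p\<in>?Perms. \<Prod>i<k. b i)"
  proof (rule sum_mono)
    fix p assume p: "p \<in> ?Perms"
    have N_signof: "N (signof p * x) = N x" for x
      by (cases p rule: sign_cases) (auto simp: N_uminus)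
    have "N (\<Prod>i=0..<k. A $$ (i, p i)) \<le> (\<Prod>i=0..<k. N (A $$ (i, p i)))" by (rule N_prod_le)
    also have "\<dots> \<le> (\<Prod>i=0..<k. b i)"
    proof (rule prod_mono)
      fix i assume i: "i \<in> {0..<k}"
      then have "p i < k" using p permutes_in_image by fastforce
      then show "0 \<le> N (A $$ (i, p i)) \<and> N (A $$ (i, p i)) \<le> b i"
        using N_nonneg row_bound i by auto
    qed
    finally show "N (signof p * (\<Prod>i=0..<k. A $$ (i, p i))) \<le> (\<Prod>i<k. b i)"
      by (simp add: N_signof atLeast0LessThan)
  qed
  also have "\<dots> = fact k * (\<Prod>i<k. b i)"
    using card_permutations[of "{0..<k}" k] by simp
  finally show ?thesis .
qed

lemma N_resultant_le:
  assumes "\<And>i. N (coeff p i) \<le> a" and "\<And>i. N (coeff q i) \<le> b"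
  shows "N (resultant p q) \<le> fact (degree p + degree q) * a ^ degree q * b ^ degree p"
proof -
  let ?k = "degree p + degree q"
  have "0 \<le> a" "0 \<le> b" using assms[of 0] N_nonneg order.trans by blast+
  have "N (resultant p q) \<le> fact ?k * (\<Prod>i<?k. if i < degree q then a else b)"
    unfolding resultant_def
    by (rule N_det_le[OF sylvester_carrier_mat])
      (use assms \<open>0 \<le> a\<close> \<open>0 \<le> b\<close> in \<open>auto simp: sylvester_index_mat N_0\<close>)
  also have "(\<Prod>i<?k. if i < degree q then a else b) = a ^ degree q * b ^ degree p"
  proof -
    have "{..<?k} \<inter> {i. i < degree q} = {..<degree q}" "{..<?k} \<inter> - {i. i < degree q} = {degree q..<?k}"
      by auto
    then show ?thesis by (simp add: prod.If_cases)
  qed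
  finally show ?thesis by (simp add: mult.assoc)
qed

end

interpretation abs_int: submultiplicative_norm "\<lambda>x::int. real_of_int \<bar>x\<bar>"
  by unfold_locales (auto simp: abs_mult)

definition l1_norm :: "int poly \<Rightarrow> real" where
  "l1_norm q = (\<Sum>i\<le>degree q. real_of_int \<bar>coeff q i\<bar>)"

lemma l1_norm_eq_sum:
  assumes "degree q < n"
  shows "l1_norm q = (\<Sum>i<n. real_of_int \<bar>coeff q i\<bar>)"
  unfolding l1_norm_def
  by (rule sum.mono_neutral_left) (use assms in \<open>auto simp: coeff_eq_0\<close>)

lemma abs_coeff_le_l1_norm: "real_of_int \<bar>coeff q i\<bar> \<le> l1_norm q"
  by (cases "i \<le> degree q") (auto simp: l1_norm_def coeff_eq_0 sum_nonneg intro: member_le_sum)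

lemma l1_norm_le:
  assumes "degree q \<le> e" and "\<And>i. real_of_int \<bar>coeff q i\<bar> \<le> B"
  shows "l1_norm q \<le> real (Suc e) * B"
proof -
  have "l1_norm q = (\<Sum>i<Suc e. real_of_int \<bar>coeff q i\<bar>)" using assms by (intro l1_norm_eq_sum) simp
  also have "\<dots> \<le> (\<Sum>i<Suc e. B)" by (rule sum_mono) (use assms in auto)
  finally show ?thesis by simp
qed

lemma l1_norm_add: "l1_norm (a + b) \<le> l1_norm a + l1_norm b"
proof -
  define n where "n = Suc (max (degree a) (degree b))"
  have "degree (a + b) < n" using degree_add_le_max[of a b] unfolding n_def by linarith
  then have "l1_norm (a + b) = (\<Sum>i<n. real_of_int \<bar>coeff a i + coeff b i\<bar>)" by (simp add: l1_norm_eq_sum)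
  also have "\<dots> \<le> (\<Sum>i<n. real_of_int \<bar>coeff a i\<bar> + real_of_int \<bar>coeff b i\<bar>)" by (rule sum_mono) simp
  also have "\<dots> = l1_norm a + l1_norm b"
    using l1_norm_eq_sum[of a n] l1_norm_eq_sum[of b n] by (simp add: sum.distrib n_def)
  finally show ?thesis .
qed

lemma l1_norm_smult: "l1_norm (smult c q) = real_of_int \<bar>c\<bar> * l1_norm q"
  using degree_smult_le[of c q]
  by (simp add: l1_norm_eq_sum[of "smult c q" "Suc (degree q)"] l1_norm_eq_sum[of q "Suc (degree q)"]
      sum_distrib_left abs_mult le_imp_less_Suc del: sum.lessThan_Suc)

lemma l1_norm_pCons: "l1_norm (pCons c q) = real_of_int \<bar>c\<bar> + l1_norm q"
proof -
  have "degree (pCons c q) < Suc (Suc (degree q))" by (simp add: degree_pCons_le le_imp_less_Suc)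
  then have "l1_norm (pCons c q) = (\<Sum>i<Suc (Suc (degree q)). real_of_int \<bar>coeff (pCons c q) i\<bar>)"
    by (rule l1_norm_eq_sum)
  also have "\<dots> = real_of_int \<bar>c\<bar> + (\<Sum>i<Suc (degree q). real_of_int \<bar>coeff q i\<bar>)"
    by (subst sum.lessThan_Suc_shift) simp
  finally show ?thesis by (simp add: l1_norm_def lessThan_Suc_atMost del: sum.lessThan_Suc)
qed

lemma l1_norm_mult: "l1_norm (a * b) \<le> l1_norm a * l1_norm b"
proof (induction a rule: pCons_induct)
  case (pCons c a)
  have "l1_norm (pCons c a * b) = l1_norm (smult c b + pCons 0 (a * b))" by simp
  also have "\<dots> \<le> real_of_int \<bar>c\<bar> * l1_norm b + l1_norm (a * b)"
    using l1_norm_add[of "smult c b" "pCons 0 (a * b)"] by (simp add: l1_norm_smult l1_norm_pCons)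
  also have "\<dots> \<le> real_of_int \<bar>c\<bar> * l1_norm b + l1_norm a * l1_norm b" using pCons by simp
  also have "\<dots> = l1_norm (pCons c a) * l1_norm b" by (simp add: l1_norm_pCons algebra_simps)
  finally show ?case .
qed (simp add: l1_norm_def)

interpretation l1: submultiplicative_norm l1_norm
  by unfold_locales (simp_all add: l1_norm_add l1_norm_mult, simp_all add: l1_norm_def)

lemma abs_coeff_le_norm_inf1: "\<bar>coeff q j\<bar> \<le> norm_inf1 q"
proof -
  have le: "\<bar>coeff q j\<bar> \<le> norm_inf1 q" if "j \<le> degree q" for j
    unfolding norm_inf1_def using that by (intro Max_ge) auto
  show ?thesis using le[of 0] le[of j] by (cases "j \<le> degree q") (auto simp: coeff_eq_0)
qed

lemma abs_coeff_coeff_le_norm_inf2: "\<bar>coeff (coeff P i) j\<bar> \<le> norm_inf2 P"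
proof -
  have le: "norm_inf1 (coeff P i) \<le> norm_inf2 P" if "i \<le> degree P" for i
    unfolding norm_inf2_def using that by (intro Max_ge) auto
  show ?thesis
    using le[of i] le[of 0] abs_coeff_le_norm_inf1[of "coeff P i" j] abs_coeff_le_norm_inf1[of "coeff P 0" 0]
    by (cases "i \<le> degree P") (auto simp: coeff_eq_0)
qed

lemma degree_coeff_le_degree_y: "degree (coeff P i) \<le> degree_y P"
  by (cases "i \<le> degree P") (auto simp: degree_y_def coeff_eq_0)

lemma degree_resultant_le:
  fixes p q :: "'a::comm_ring_1 poly poly"
  assumes "\<And>i. degree (coeff p i) \<le> e" and "\<And>i. degree (coeff q i) \<le> e"
  shows "degree (resultant p q) \<le> e * (degree p + degree q)"
  unfolding resultant_def
  by (rule degree_det_le[OF _ sylvester_carrier_mat]) (use assms in \<open>auto simp: sylvester_index_mat\<close>)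

lemma l1_norm_coeff_le:
  assumes "degree_y P \<le> e"
  shows "l1_norm (coeff P i) \<le> real (Suc e) * of_int (norm_inf2 P)"
  by (rule l1_norm_le)
    (use order_trans[OF degree_coeff_le_degree_y assms] abs_coeff_coeff_le_norm_inf2
      in \<open>auto simp flip: of_int_abs\<close>)

lemma l1_norm_resultant_le:
  fixes P f :: "int poly poly"
  assumes "degree P \<le> m" and "degree_y P \<le> e" and "degree_y f \<le> e" and "1 \<le> norm_inf2 f"
  shows "l1_norm (resultant P f) \<le> fact (m + degree f) * real (Suc e) ^ (m + degree f)
    * of_int (norm_inf2 P) ^ degree f * of_int (norm_inf2 f) ^ m"
proof -
  define B where "B = real_of_int (norm_inf2 P)"
  define F where "F = real_of_int (norm_inf2 f)"
  have "0 \<le> B" unfolding B_def using abs_coeff_coeff_le_norm_inf2[of P 0 0] by simp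
  have "1 \<le> F" unfolding F_def using assms(4) by simp
  have "l1_norm (resultant P f) \<le> fact (degree P + degree f) * (real (Suc e) * B) ^ degree f
      * (real (Suc e) * F) ^ degree P"
    unfolding B_def F_def by (rule l1.N_resultant_le) (use l1_norm_coeff_le assms(2,3) in blast)+
  also have "\<dots> = fact (degree P + degree f) * real (Suc e) ^ (degree P + degree f)
      * B ^ degree f * F ^ degree P"
    by (simp add: power_mult_distrib power_add mult_ac)
  also have "\<dots> \<le> fact (m + degree f) * real (Suc e) ^ (m + degree f) * B ^ degree f * F ^ m"
  proof -
    have "fact (degree P + degree f) * real (Suc e) ^ (degree P + degree f)
        \<le> fact (m + degree f) * real (Suc e) ^ (m + degree f)"
      using assms(1) by (intro mult_mono fact_mono power_increasing) auto
    moreover have "F ^ degree P \<le> F ^ m" using assms(1) \<open>1 \<le> F\<close> by (rule power_increasing)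
    ultimately show ?thesis using \<open>0 \<le> B\<close> \<open>1 \<le> F\<close> by (intro mult_mono[OF mult_right_mono]) auto
  qed
  finally show ?thesis unfolding B_def F_def .
qed

lemma abs_pseudonorm_le:
  fixes P f :: "int poly poly" and h :: "int poly"
  assumes "degree P \<le> m" and "degree_y P \<le> e" and "degree_y f \<le> e" and "1 \<le> norm_inf2 f"
    and h_coeff: "\<And>j. real_of_int \<bar>coeff h j\<bar> \<le> Hh" and "1 \<le> Hh"
  defines "k \<equiv> m + degree f"
  shows "real_of_int \<bar>resultant (resultant P f) h\<bar> \<le>
    fact (k * e + degree h) * Hh ^ (k * e) * (fact k * real (Suc e) ^ k) ^ degree h
      * of_int (norm_inf2 P) ^ (degree f * degree h) * of_int (norm_inf2 f) ^ (degree h * m)"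
proof -
  define R where "R = resultant P f"
  define L where "L = fact k * real (Suc e) ^ k * of_int (norm_inf2 P) ^ degree f * of_int (norm_inf2 f) ^ m"
  have "degree R \<le> e * (degree P + degree f)" unfolding R_def
    by (rule degree_resultant_le) (use order_trans[OF degree_coeff_le_degree_y] assms(2,3) in blast)+
  also have "\<dots> \<le> k * e" using assms(1) unfolding k_def by simp
  finally have degree_R: "degree R \<le> k * e" .
  have "real_of_int \<bar>resultant R h\<bar> \<le> fact (degree R + degree h) * l1_norm R ^ degree h * Hh ^ degree R"
    by (rule abs_int.N_resultant_le) (use abs_coeff_le_l1_norm h_coeff in auto)
  also have "\<dots> \<le> fact (k * e + degree h) * L ^ degree h * Hh ^ (k * e)"
    using degree_R l1_norm_resultant_le[OF assms(1-4)] l1.N_nonneg[of R] \<open>1 \<le> Hh\<close>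
    unfolding R_def L_def k_def by (intro mult_mono fact_mono power_mono power_increasing) auto
  also have "\<dots> = fact (k * e + degree h) * Hh ^ (k * e) * (fact k * real (Suc e) ^ k) ^ degree h
      * of_int (norm_inf2 P) ^ (degree f * degree h) * of_int (norm_inf2 f) ^ (degree h * m)"
    by (simp add: L_def power_mult_distrib power_mult[symmetric] mult_ac)
  finally show ?thesis unfolding R_def .
qed

lemma powr_bound_power_eq:
  fixes x :: real
  assumes "0 < x" and "0 < n1" and "0 < n"
  shows "(x powr ((real n - d) / real (n1 * (m + 1)))) ^ (k * n1)
    = (x ^ n) powr ((1 - d / real n) * real k / real (m + 1))"
proof -
  have "(x powr ((real n - d) / real (n1 * (m + 1)))) ^ (k * n1)
      = x powr ((real n - d) / real (n1 * (m + 1)) * real (k * n1))"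
    using assms by (simp add: powr_realpow[symmetric] powr_powr)
  also have "(real n - d) / real (n1 * (m + 1)) * real (k * n1) = (real n - d) * real k / real (m + 1)"
  proof -
    have "0 < real n1 * (real m + 1)" using assms by simp
    then show ?thesis by (simp add: field_simps)
  qed
  also have "\<dots> = real n * ((1 - d / real n) * real k / real (m + 1))"
  proof -
    have "real n * (1 - d / real n) = real n - d" using assms by (simp add: right_diff_distrib)
    then show ?thesis by (metis mult.assoc times_divide_eq_right)
  qed
  also have "x powr \<dots> = (x ^ n) powr ((1 - d / real n) * real k / real (m + 1))"
    using assms by (simp only: powr_realpow[symmetric] powr_powr)
  finally show ?thesis .
qed

definition pseudonorm_const :: "nat \<Rightarrow> nat \<Rightarrow> nat \<Rightarrow> int \<Rightarrow> real" where
  "pseudonorm_const n1 m dx H =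
    fact ((m + dx) * (n1 - 1) + n1) * max 1 (real_of_int H) ^ ((m + dx) * (n1 - 1))
      * (fact (m + dx) * real n1 ^ (m + dx)) ^ n1 * (2 powr ((real (n1 * (m + 1)) - 1) / 4)) ^ (dx * n1)"

lemma pseudonorm_const_pos: "0 < pseudonorm_const n1 m dx H"
  unfolding pseudonorm_const_def by (cases "n1 = 0") auto

lemma abs_pseudonorm_le_const:
  fixes p n2 d :: nat and h :: "int poly" and f P :: "int poly poly"
  assumes "0 < p" and "0 < n1 * n2" and "degree h = n1" and "norm_inf1 h = H"
    and "lead_coeff f = 1" and "degree f = dx" and "degree_y f \<le> n1 - 1"
    and "degree P \<le> m" and "degree_y P \<le> n1 - 1"
    and P_bound: "real_of_int (norm_inf2 P) \<le> 2 powr ((real (n1 * (m + 1)) - 1) / 4)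
      * real p powr ((real (n1 * n2) - real d) / real (n1 * (m + 1)))"
  shows "real_of_int \<bar>resultant (resultant P f) h\<bar> \<le> pseudonorm_const n1 m dx H
    * real (p ^ (n1 * n2)) powr ((1 - real d / real (n1 * n2)) * real dx / real (m + 1))
    * real_of_int (norm_inf2 f) ^ (n1 * m)"
proof -
  define k where "k = m + dx"
  define Hh where "Hh = max 1 (real_of_int H)"
  define c where "c = 2 powr ((real (n1 * (m + 1)) - 1) / 4)"
  define A where "A = fact (k * (n1 - 1) + n1) * Hh ^ (k * (n1 - 1)) * (fact k * real n1 ^ k) ^ n1"
  define Q where "Q = real (p ^ (n1 * n2)) powr ((1 - real d / real (n1 * n2)) * real dx / real (m + 1))"
  have "0 < n1" "0 < real p" using assms(1,2) by simp_all
  have "0 \<le> A" unfolding A_def Hh_def by simp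
  have "1 \<le> norm_inf2 f" using abs_coeff_coeff_le_norm_inf2[of f dx 0] assms(5,6) by simp
  have h_coeff: "real_of_int \<bar>coeff h j\<bar> \<le> Hh" for j
    using abs_coeff_le_norm_inf1[of h j] assms(4) unfolding Hh_def by linarith
  have "Suc (n1 - 1) = n1" using \<open>0 < n1\<close> by simp
  then have "real_of_int \<bar>resultant (resultant P f) h\<bar>
      \<le> A * of_int (norm_inf2 P) ^ (dx * n1) * of_int (norm_inf2 f) ^ (n1 * m)"
    using abs_pseudonorm_le[OF assms(8,9,7) \<open>1 \<le> norm_inf2 f\<close> h_coeff]
    by (simp add: A_def Hh_def k_def assms(3,6))
  also have "\<dots> \<le> A * (c ^ (dx * n1) * Q) * of_int (norm_inf2 f) ^ (n1 * m)"
  proof (intro mult_right_mono mult_left_mono)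
    show "of_int (norm_inf2 P) ^ (dx * n1) \<le> c ^ (dx * n1) * Q"
      using power_mono[OF P_bound, of "dx * n1"] abs_coeff_coeff_le_norm_inf2[of P 0 0]
        powr_bound_power_eq[OF \<open>0 < real p\<close> \<open>0 < n1\<close> assms(2)]
      by (simp add: c_def Q_def power_mult_distrib)
  qed (use \<open>0 \<le> A\<close> \<open>1 \<le> norm_inf2 f\<close> in auto)
  finally show ?thesis
    unfolding pseudonorm_const_def A_def Q_def k_def Hh_def c_def by (simp only: mult_ac)
qed

theorem mainTheorem4:
  fixes n1 m dx :: nat and H :: int
  shows "\<exists>K::real. K > 0 \<and>
    (\<forall>(p::nat) (n2::nat) (d::nat) (h::int poly) (f::int poly poly) (P::int poly poly).
      prime p \<longrightarrow> d dvd n1 * n2 \<longrightarrow> 1 < d \<longrightarrow> d < n1 * n2 \<longrightarrow>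
      lead_coeff h = 1 \<longrightarrow> degree h = n1 \<longrightarrow> norm_inf1 h = H \<longrightarrow>
      lead_coeff f = 1 \<longrightarrow> degree f = dx \<longrightarrow> degree_y f \<le> n1 - 1 \<longrightarrow>
      degree P \<le> m \<longrightarrow> degree_y P \<le> n1 - 1 \<longrightarrow>
      real_of_int (norm_inf2 P) \<le>
        2 powr ((real (n1 * (m + 1)) - 1) / 4) *
        real p powr ((real (n1 * n2) - real d) / real (n1 * (m + 1))) \<longrightarrow>
      real_of_int \<bar>resultant (resultant P f) h\<bar> \<le>
        K * real (p ^ (n1 * n2)) powr ((1 - real d / real (n1 * n2)) * real dx / real (m + 1))
          * real_of_int (norm_inf2 f) ^ (n1 * m))"
  by (intro exI[of _ "pseudonorm_const n1 m dx H"] conjI allI impI pseudonorm_const_pos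
      abs_pseudonorm_le_const) (auto dest: prime_gt_0_nat intro!: gr0I)

end
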